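(* A compact Hausdorff flow $(X,T)$ has the property that every point of $X$ is almost automorphic if and only if $(X,T)$ is distal and the restriction of the action to every minimal subset of $X$ is equicontinuous.
   Context: $X$ compact Hausdorff, $T$ a topological group acting continuously on $X$. A point $x$ is almost automorphic if for every net $\{t_i\}\subset T$ with $t_ix\to y$ it holds that $t_i^{-1}y\to x$. The flow is distal if for any two distinct points $x\ne y$ there are no net $\{t_i\}\subset T$ and $z\in X$ with $t_ix\to z$ and $t_iy\to z$. A minimal set is a nonempty closed $T$-invariant subset $M$ in which every orbit is dense; $(M,T)$ is equicontinuous if for every entourage $\alpha$ of $M$ there is an entourage $\beta$ with $(x,y)\in\beta\Rightarrow(tx,ty)\in\alpha$ for all $t\in T$. *)

theory Defs
  imports "HOL-Analysis.Analysis"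
begin

text \<open>A (left) continuous action of a topological group T (written additively,
  class topological_group_add, not necessarily abelian) on a space X.\<close>
definition continuous_action :: "('g::topological_group_add \<Rightarrow> 'x::topological_space \<Rightarrow> 'x) \<Rightarrow> bool" where
  "continuous_action act \<longleftrightarrow>
     (\<forall>x. act 0 x = x) \<and> (\<forall>s t x. act (s + t) x = act s (act t x)) \<and>
     continuous_on UNIV (\<lambda>p. act (fst p) (snd p))"

text \<open>Nets in T are represented by their (proper) eventuality filters F on T.\<close>
definition almost_automorphic_point :: "('g::topological_group_add \<Rightarrow> 'x::topological_space \<Rightarrow> 'x) \<Rightarrow> 'x \<Rightarrow> bool" where
  "almost_automorphic_point act x \<longleftrightarrow>
     (\<forall>(F::'g filter) y. F \<noteq> bot \<longrightarrow> ((\<lambda>t. act t x) \<longlongrightarrow> y) F \<longrightarrow> ((\<lambda>t. act (- t) y) \<longlongrightarrow> x) F)"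

definition distal_flow :: "('g::topological_group_add \<Rightarrow> 'x::topological_space \<Rightarrow> 'x) \<Rightarrow> bool" where
  "distal_flow act \<longleftrightarrow>
     (\<forall>x y. x \<noteq> y \<longrightarrow> \<not> (\<exists>(F::'g filter) z. F \<noteq> bot \<and>
        ((\<lambda>t. act t x) \<longlongrightarrow> z) F \<and> ((\<lambda>t. act t y) \<longlongrightarrow> z) F))"

definition minimal_set :: "('g::topological_group_add \<Rightarrow> 'x::topological_space \<Rightarrow> 'x) \<Rightarrow> 'x set \<Rightarrow> bool" where
  "minimal_set act M \<longleftrightarrow>
     M \<noteq> {} \<and> closed M \<and> (\<forall>t. \<forall>x\<in>M. act t x \<in> M) \<and>
     (\<forall>x\<in>M. closure (range (\<lambda>t. act t x)) = M)"

text \<open>Entourages of the (unique) uniformity of a compact Hausdorff subspace M: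
  the neighbourhoods of the diagonal of M in M \<times> M.\<close>
definition entourage_on :: "'x::topological_space set \<Rightarrow> ('x \<times> 'x) set \<Rightarrow> bool" where
  "entourage_on M E \<longleftrightarrow> E \<subseteq> M \<times> M \<and>
     (\<exists>U. open U \<and> (\<forall>x\<in>M. (x, x) \<in> U) \<and> U \<inter> (M \<times> M) \<subseteq> E)"

definition equicontinuous_on :: "('g::topological_group_add \<Rightarrow> 'x::topological_space \<Rightarrow> 'x) \<Rightarrow> 'x set \<Rightarrow> bool" where
  "equicontinuous_on act M \<longleftrightarrow>
     (\<forall>\<alpha>. entourage_on M \<alpha> \<longrightarrow> (\<exists>\<beta>. entourage_on M \<beta> \<and>
        (\<forall>x y. (x, y) \<in> \<beta> \<longrightarrow> (\<forall>t. (act t x, act t y) \<in> \<alpha>))))"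

end

theory Submission
  imports Defs
begin

text \<open>
  (\<open>\<Leftarrow>\<close>) In an equicontinuous minimal set every point is almost automorphic, by comparing the
  limits of translated nets.  Distality together with equicontinuity of the minimal set in the
  orbit closure of a point \<open>x\<close> forces \<open>x\<close> to lie in that minimal set.

  (\<open>\<Rightarrow>\<close>) Distality is immediate.  For equicontinuity we use the Ellis enveloping semigroup
  \<open>Env\<close>, the closure of the maps \<open>act t\<close> in \<open>X\<^sup>X\<close>.  Almost automorphy makes every element of
  \<open>Env\<close> invertible within \<open>Env\<close> with continuous inversion, so left translations of \<open>Env\<close> are
  continuous and each element of \<open>Env\<close> is continuous on every minimal set.  An entourage is
  reduced by finitely many Urysohn functions to finitely many real coordinates; a Cantor scheme
  argument (uncountably many separated branch points versus a finite net in a metrizable image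
  of \<open>Env\<close>) gives an open piece of the minimal set all of whose translates are small, and
  minimality spreads this piece over the whole minimal set.
\<close>

section \<open>Filters, nets and the product topology\<close>

lemma tendsto_fun_iff:
  fixes f :: "'i \<Rightarrow> 'a \<Rightarrow> 'b::topological_space"
  shows "(f \<longlongrightarrow> l) F \<longleftrightarrow> (\<forall>x. ((\<lambda>i. f i x) \<longlongrightarrow> l x) F)"
proof -
  have "(f \<longlongrightarrow> l) F \<longleftrightarrow> limitin (product_topology (\<lambda>i. euclidean) UNIV) f l F"
    by (simp add: euclidean_product_topology)
  also have "\<dots> \<longleftrightarrow> (\<forall>x. ((\<lambda>i. f i x) \<longlongrightarrow> l x) F)"
    by (subst limitin_componentwise) auto
  finally show ?thesis .
qed

lemma compact_UNIV_fun:
  assumes "compact (UNIV :: 'b::topological_space set)"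
  shows "compact (UNIV :: ('a \<Rightarrow> 'b) set)"
proof -
  have "compact_space (euclidean :: 'b topology)"
    using assms by (simp add: compact_space_def)
  then have "compact_space (product_topology (\<lambda>i::'a. (euclidean :: 'b topology)) UNIV)"
    by (simp add: compact_space_product_topology)
  then show ?thesis
    by (simp add: euclidean_product_topology compact_space_def)
qed

lemma convergent_refinement:
  fixes f :: "'a \<Rightarrow> 'b::topological_space"
  assumes "compact (UNIV :: 'b set)" "F \<noteq> bot"
  obtains z F' where "F' \<le> F" "F' \<noteq> bot" "(f \<longlongrightarrow> z) F'"
proof -
  have "filtermap f F \<noteq> bot" using assms(2) by (simp add: filtermap_bot_iff)
  then obtain z where z: "inf (nhds z) (filtermap f F) \<noteq> bot"
    using assms(1) unfolding compact_filter by auto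
  define F' where "F' = inf F (filtercomap f (nhds z))"
  have "F' \<noteq> bot"
  proof
    assume "F' = bot"
    then obtain Q R where Q: "eventually Q F" and R: "eventually R (filtercomap f (nhds z))"
      and QR: "\<forall>x. Q x \<and> R x \<longrightarrow> False"
      unfolding F'_def trivial_limit_def eventually_inf by blast
    from R obtain R' where R': "eventually R' (nhds z)" and RR: "\<forall>x. R' (f x) \<longrightarrow> R x"
      unfolding eventually_filtercomap by blast
    have "eventually (\<lambda>x. \<not> R' (f x)) F" using Q by (rule eventually_mono) (use QR RR in blast)
    then have "eventually (\<lambda>y. \<not> R' y) (filtermap f F)" by (simp add: eventually_filtermap)
    then have "eventually (\<lambda>y. False) (inf (nhds z) (filtermap f F))"
      using R' unfolding eventually_inf by blast
    with z show False by (simp add: eventually_False)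
  qed
  moreover have "(f \<longlongrightarrow> z) F'"
    unfolding F'_def by (rule tendsto_mono[OF inf_le2 filterlim_filtercomap])
  ultimately show ?thesis using that[of F' z] by (simp add: F'_def)
qed

lemma closure_range_net:
  assumes "l \<in> closure (range f)"
  shows "filtercomap f (nhds l) \<noteq> bot" and "(f \<longlongrightarrow> l) (filtercomap f (nhds l))"
proof
  assume "filtercomap f (nhds l) = bot"
  then obtain Q where Q: "eventually Q (nhds l)" "\<forall>x. Q (f x) \<longrightarrow> False"
    unfolding trivial_limit_def eventually_filtercomap by blast
  then obtain S where S: "open S" "l \<in> S" "\<forall>y\<in>S. Q y" unfolding eventually_nhds by blast
  have "S \<inter> range f \<noteq> {}" using assms S(1,2) open_Int_closure_eq_empty by blast
  with S Q show False by blast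
qed (rule filterlim_filtercomap)

lemma not_tendsto_refinement:
  assumes "\<not> (f \<longlongrightarrow> l) F"
  obtains W F' where "open W" "l \<in> W" "F' \<le> F" "F' \<noteq> bot" "eventually (\<lambda>i. f i \<notin> W) F'"
proof -
  obtain W where W: "open W" "l \<in> W" "\<not> eventually (\<lambda>i. f i \<in> W) F"
    using assms unfolding tendsto_def by blast
  define F' where "F' = inf F (principal {i. f i \<notin> W})"
  have "F' \<noteq> bot" unfolding F'_def using W(3) by (simp add: trivial_limit_def eventually_inf_principal)
  moreover have "eventually (\<lambda>i. f i \<notin> W) F'" unfolding F'_def eventually_inf_principal by simp
  ultimately show ?thesis using that[OF W(1,2), of F'] by (simp add: F'_def)
qed

lemma not_tendsto_other_limit:
  fixes f :: "'a \<Rightarrow> 'b::topological_space"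
  assumes "compact (UNIV :: 'b set)" "\<not> (f \<longlongrightarrow> l) F"
  obtains z F' where "F' \<le> F" "F' \<noteq> bot" "(f \<longlongrightarrow> z) F'" "z \<noteq> l"
proof -
  obtain W F1 where W: "open W" "l \<in> W" "F1 \<le> F" "F1 \<noteq> bot" "eventually (\<lambda>i. f i \<notin> W) F1"
    using not_tendsto_refinement[OF assms(2)] .
  obtain z F' where F': "F' \<le> F1" "F' \<noteq> bot" "(f \<longlongrightarrow> z) F'"
    using convergent_refinement[OF assms(1) W(4)] .
  have "eventually (\<lambda>i. f i \<in> -W) F'" using W(5) F'(1) by (auto elim: filter_leD)
  then have "z \<in> -W" using Lim_in_closed_set[OF _ _ F'(2,3)] W(1) by blast
  then have "z \<noteq> l" using W(2) by auto
  then show ?thesis using that[of F' z] F' W(3) by (meson order_trans)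
qed

lemma uncountable_nat_bool: "\<not> countable (UNIV :: (nat \<Rightarrow> bool) set)"
proof
  assume "countable (UNIV :: (nat \<Rightarrow> bool) set)"
  then obtain f :: "(nat \<Rightarrow> bool) \<Rightarrow> nat" where f: "inj f"
    unfolding countable_def by blast
  define g where "g n = (\<not> inv f n n)" for n
  have "inv f (f g) = g" using f by simp
  then have "g (f g) = (\<not> g (f g))" by (metis g_def)
  then show False by simp
qed

section \<open>Almost automorphic points and distality\<close>

lemma almost_automorphic_pointD:
  assumes "almost_automorphic_point act x" "F \<noteq> bot" "((\<lambda>t. act t x) \<longlongrightarrow> y) F"
  shows "((\<lambda>t. act (- t) y) \<longlongrightarrow> x) F"
  using assms unfolding almost_automorphic_point_def by blast

text \<open>If every point is almost automorphic, two points with a common limit along a net are both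
  the limit of the inverse net applied to that common limit, hence equal: the flow is distal.\<close>

lemma all_almost_automorphic_imp_distal:
  fixes act :: "'g::topological_group_add \<Rightarrow> 'x::t2_space \<Rightarrow> 'x"
  assumes "\<forall>x. almost_automorphic_point act x"
  shows "distal_flow act"
  unfolding distal_flow_def
proof (intro allI impI notI)
  fix x y :: 'x assume "x \<noteq> y"
  assume "\<exists>(F::'g filter) z. F \<noteq> bot \<and> ((\<lambda>t. act t x) \<longlongrightarrow> z) F \<and> ((\<lambda>t. act t y) \<longlongrightarrow> z) F"
  then obtain F :: "'g filter" and z
    where F: "F \<noteq> bot" "((\<lambda>t. act t x) \<longlongrightarrow> z) F" "((\<lambda>t. act t y) \<longlongrightarrow> z) F"
    by blast
  have "((\<lambda>t. act (-t) z) \<longlongrightarrow> x) F" "((\<lambda>t. act (-t) z) \<longlongrightarrow> y) F"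
    using assms almost_automorphic_pointD F by blast+
  with F(1) \<open>x \<noteq> y\<close> show False using tendsto_unique by blast
qed

section \<open>Compact flows\<close>

locale flow =
  fixes act :: "'g::topological_group_add \<Rightarrow> 'x::t2_space \<Rightarrow> 'x"
  assumes compact_space: "compact (UNIV :: 'x set)"
    and continuous_act: "continuous_action act"
begin

lemma act_zero [simp]: "act 0 x = x"
  using continuous_act by (simp add: continuous_action_def)

lemma act_add: "act (s + t) x = act s (act t x)"
  using continuous_act by (simp add: continuous_action_def)

lemma act_minus_act [simp]: "act (-t) (act t x) = x"
  by (metis act_zero act_add left_minus)

lemma continuous_on_act: "continuous_on UNIV (act t)"
proof -
  have "continuous_on UNIV (\<lambda>p. act (fst p) (snd p))"
    using continuous_act by (simp add: continuous_action_def)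
  then have "continuous_on UNIV ((\<lambda>p. act (fst p) (snd p)) \<circ> (\<lambda>x. (t, x)))"
    by (intro continuous_on_compose continuous_intros) (auto elim: continuous_on_subset)
  then show ?thesis by (simp add: o_def)
qed

lemma compact_closed: "closed (S :: 'x set) \<Longrightarrow> compact S"
  using compact_Int_closed[OF compact_space, of S] by simp

lemma closure_invariant:
  assumes "\<And>t y. y \<in> R \<Longrightarrow> act t y \<in> R" "y \<in> closure R"
  shows "act t y \<in> closure R"
proof -
  have "act t ` closure R \<subseteq> closure R"
  proof (rule image_closure_subset)
    show "continuous_on (closure R) (act t)" by (rule continuous_on_subset[OF continuous_on_act]) simp
    show "act t ` R \<subseteq> closure R" using assms(1) closure_subset by fastforce
  qed simp
  then show ?thesis using assms(2) by blast
qed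

lemma orbit_closure_invariant:
  "y \<in> closure (range (\<lambda>s. act s x)) \<Longrightarrow> act t y \<in> closure (range (\<lambda>s. act s x))"
  by (rule closure_invariant) (auto simp flip: act_add)

definition closed_invariant :: "'x set \<Rightarrow> bool" where
  "closed_invariant K \<longleftrightarrow> K \<noteq> {} \<and> closed K \<and> (\<forall>t. \<forall>x\<in>K. act t x \<in> K)"

text \<open>By compactness (finite intersection property) a nonempty chain of nonempty closed
  invariant sets has a nonempty, hence closed invariant, intersection.\<close>

lemma closed_invariant_chain_Inter:
  assumes C: "C \<noteq> {}" "\<And>K. K \<in> C \<Longrightarrow> closed_invariant K"
    and chain: "\<And>K L. K \<in> C \<Longrightarrow> L \<in> C \<Longrightarrow> K \<subseteq> L \<or> L \<subseteq> K"
  shows "closed_invariant (\<Inter>C)"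
proof -
  have "UNIV \<inter> \<Inter>C \<noteq> {}"
  proof (rule compact_imp_fip[OF compact_space])
    show "closed K" if "K \<in> C" for K using C(2)[OF that] by (simp add: closed_invariant_def)
    fix F' assume F': "finite F'" "F' \<subseteq> C"
    show "UNIV \<inter> \<Inter> F' \<noteq> {}"
    proof (cases "F' = {}")
      case False
      have "subset.chain UNIV F'" using chain F'(2) by (auto simp: subset_chain_def)
      then have "\<Inter>F' \<in> C" using Inter_in_chain[OF F'(1) False] F'(2) by blast
      then show ?thesis using C(2) by (simp add: closed_invariant_def)
    qed simp
  qed
  then show ?thesis
    using C(1,2) unfolding closed_invariant_def by (auto intro: closed_Inter)
qed

lemma exists_minimal_subset:
  assumes "closed_invariant S"
  obtains M where "M \<subseteq> S" "minimal_set act M"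
proof -
  define Fam where "Fam = {K. K \<subseteq> S \<and> closed_invariant K}"
  have "\<exists>Mc\<in>uminus ` Fam. \<forall>X\<in>uminus ` Fam. Mc \<subseteq> X \<longrightarrow> X = Mc"
  proof (rule subset_Zorn)
    fix C assume ch: "subset.chain (uminus ` Fam) C"
    show "\<exists>U\<in>uminus ` Fam. \<forall>X\<in>C. X \<subseteq> U"
    proof (cases "C = {}")
      case True
      then show ?thesis using assms unfolding Fam_def by blast
    next
      case False
      have sub: "uminus ` C \<subseteq> Fam"
        using ch unfolding subset_chain_def by (auto simp: image_subset_iff)
      have chain: "K \<subseteq> L \<or> L \<subseteq> K" if K: "K \<in> uminus ` C" and L: "L \<in> uminus ` C" for K L
      proof -
        obtain X Y where "X \<in> C" "Y \<in> C" "K = -X" "L = -Y" using K L by blast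
        then show ?thesis using ch unfolding subset_chain_def by auto
      qed
      have "closed_invariant (\<Inter>(uminus ` C))"
        by (rule closed_invariant_chain_Inter) (use False sub chain in \<open>auto simp: Fam_def\<close>)
      moreover have "\<Inter>(uminus ` C) \<subseteq> S" using False sub unfolding Fam_def by blast
      ultimately have "- \<Inter>(uminus ` C) \<in> uminus ` Fam" unfolding Fam_def by (intro imageI) simp
      moreover have "X \<subseteq> - \<Inter>(uminus ` C)" if "X \<in> C" for X using that by blast
      ultimately show ?thesis by (intro bexI[of _ "- \<Inter>(uminus ` C)"]) auto
    qed
  qed
  then obtain M where M: "M \<in> Fam" and M_min: "\<And>K. K \<in> Fam \<Longrightarrow> K \<subseteq> M \<Longrightarrow> K = M"
    by (metis (no_types, lifting) Compl_subset_Compl_iff double_compl image_iff)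
  have "minimal_set act M"
    unfolding minimal_set_def
  proof (intro conjI ballI allI)
    show "M \<noteq> {}" "closed M"
      using M unfolding Fam_def closed_invariant_def by auto
    show "act t x \<in> M" if "x \<in> M" for t x
      using M that unfolding Fam_def closed_invariant_def by auto
    fix x assume x: "x \<in> M"
    let ?K = "closure (range (\<lambda>t. act t x))"
    have "?K \<subseteq> M"
      using M x unfolding Fam_def closed_invariant_def by (intro closure_minimal) auto
    moreover have "closed_invariant ?K"
      unfolding closed_invariant_def using orbit_closure_invariant by auto
    ultimately show "?K = M" using M M_min unfolding Fam_def by blast
  qed
  then show ?thesis using that M unfolding Fam_def by blast
qed

text \<open>Compact Hausdorff spaces are normal, so distinct points are separated by Urysohn
  functions.\<close>

lemma urysohn_points:
  assumes "p \<noteq> q"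
  obtains \<phi> :: "'x \<Rightarrow> real"
  where "continuous_on UNIV \<phi>" "\<And>x. \<phi> x \<in> {0..1}" "\<phi> p = 0" "\<phi> q = 1"
proof -
  have "Hausdorff_space (euclidean :: 'x topology)"
    unfolding Hausdorff_space_def by (metis disjnt_def hausdorff open_openin)
  then have "normal_space (euclidean :: 'x topology)"
    using compact_space
    by (intro compact_Hausdorff_or_regular_imp_normal_space) (auto simp: compact_space_def)
  moreover have "closedin euclidean {p}" "closedin euclidean {q}" "disjnt {p} {q}"
    using assms by auto
  ultimately obtain f :: "'x \<Rightarrow> real"
    where f: "continuous_map euclidean (top_of_set {0..1}) f" "f ` {p} \<subseteq> {0}" "f ` {q} \<subseteq> {1}"
    unfolding normal_space_iff_Urysohn by blast
  then show ?thesis using that[of f] by (auto simp: continuous_map_in_subtopology Pi_iff)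
qed

lemma continuous_on_gap:
  assumes "continuous_on UNIV (\<phi> :: 'a::topological_space \<Rightarrow> real)"
  shows "continuous_on UNIV (\<lambda>p::'a \<times> 'a. \<bar>\<phi> (fst p) - \<phi> (snd p)\<bar>)"
proof -
  have "continuous_on UNIV (\<lambda>p::'a \<times> 'a. \<phi> (fst p))" "continuous_on UNIV (\<lambda>p::'a \<times> 'a. \<phi> (snd p))"
    by (auto intro!: continuous_on_compose2[OF assms] continuous_intros)
  then show ?thesis by (intro continuous_intros)
qed

lemma equicontinuous_limits_agree:
  assumes eq: "equicontinuous_on act M" and G: "G \<noteq> bot"
    and ab: "\<And>i. a i \<in> M" "\<And>i. b i \<in> M" and c: "c \<in> M"
    and la: "(a \<longlongrightarrow> c) G" and lb: "(b \<longlongrightarrow> c) G"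
    and ld: "((\<lambda>i. act (s i) (a i)) \<longlongrightarrow> d) G" and ld': "((\<lambda>i. act (s i) (b i)) \<longlongrightarrow> d') G"
  shows "d = d'"
proof (rule ccontr)
  assume "d \<noteq> d'"
  then obtain \<phi> :: "'x \<Rightarrow> real" where \<phi>: "continuous_on UNIV \<phi>" "\<phi> d = 0" "\<phi> d' = 1"
    using urysohn_points by metis
  define U where "U = {p. \<bar>\<phi> (fst p) - \<phi> (snd p)\<bar> < 1/3}"
  have "open U" unfolding U_def
    by (rule open_Collect_less[OF continuous_on_gap[OF \<phi>(1)] continuous_on_const])
  then have "entourage_on M (U \<inter> (M \<times> M))" unfolding entourage_on_def by (auto simp: U_def)
  then obtain \<beta> where \<beta>: "entourage_on M \<beta>"
    and \<beta>_small: "\<And>x y t. (x, y) \<in> \<beta> \<Longrightarrow> (act t x, act t y) \<in> U"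
    using eq unfolding equicontinuous_on_def by blast
  then obtain V where V: "open V" "\<And>x. x \<in> M \<Longrightarrow> (x, x) \<in> V" "V \<inter> (M \<times> M) \<subseteq> \<beta>"
    unfolding entourage_on_def by blast
  have "((\<lambda>i. (a i, b i)) \<longlongrightarrow> (c, c)) G" using la lb by (rule tendsto_Pair)
  then have "eventually (\<lambda>i. (a i, b i) \<in> V) G"
    using V(1) V(2)[OF c] topological_tendstoD by blast
  then have close: "eventually (\<lambda>i. \<bar>\<phi> (act (s i) (a i)) - \<phi> (act (s i) (b i))\<bar> < 1/3) G"
    by (rule eventually_mono) (use V(3) ab \<beta>_small in \<open>force simp: U_def\<close>)
  have lim_a: "((\<lambda>i. \<phi> (act (s i) (a i))) \<longlongrightarrow> 0) G"
    and lim_b: "((\<lambda>i. \<phi> (act (s i) (b i))) \<longlongrightarrow> 1) G"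
    using continuous_on_tendsto_compose[OF \<phi>(1) ld] continuous_on_tendsto_compose[OF \<phi>(1) ld'] \<phi>(2,3)
    by auto
  have "eventually (\<lambda>i. \<phi> (act (s i) (a i)) < 1/3) G" by (rule order_tendstoD(2)[OF lim_a]) simp
  moreover have "eventually (\<lambda>i. \<phi> (act (s i) (b i)) > 2/3) G" by (rule order_tendstoD(1)[OF lim_b]) simp
  ultimately have "eventually (\<lambda>i. False) G" using close
    by eventually_elim auto
  with G show False by (simp add: trivial_limit_def)
qed

section \<open>Distal flows with equicontinuous minimal sets are almost automorphic\<close>

text \<open>In an equicontinuous minimal set every point is almost automorphic: if \<open>t\<^sub>i x \<rightarrow> y\<close> and
  \<open>-t\<^sub>i y\<close> had a subnet limit \<open>z \<noteq> x\<close>, the nets \<open>t\<^sub>i x \<rightarrow> y\<close> and the constant net \<open>y\<close>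
  would be translated by \<open>-t\<^sub>i\<close> to the different limits \<open>x\<close> and \<open>z\<close>.\<close>

lemma equicontinuous_minimal_almost_automorphic:
  assumes M: "minimal_set act M" "equicontinuous_on act M" and x: "x \<in> M"
  shows "almost_automorphic_point act x"
  unfolding almost_automorphic_point_def
proof (intro allI impI)
  fix F :: "'g filter" and y
  assume F: "F \<noteq> bot" and lim: "((\<lambda>t. act t x) \<longlongrightarrow> y) F"
  have M_closed: "closed M" and M_inv: "\<And>t y. y \<in> M \<Longrightarrow> act t y \<in> M"
    using M(1) unfolding minimal_set_def by auto
  have y: "y \<in> M" using Lim_in_closed_set[OF M_closed _ F lim] M_inv x by auto
  show "((\<lambda>t. act (- t) y) \<longlongrightarrow> x) F"
  proof (rule ccontr)
    assume "\<not> ((\<lambda>t. act (- t) y) \<longlongrightarrow> x) F"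
    then obtain z F' where F': "F' \<le> F" "F' \<noteq> bot" "((\<lambda>t. act (-t) y) \<longlongrightarrow> z) F'" "z \<noteq> x"
      using not_tendsto_other_limit[OF compact_space] by blast
    have "x = z"
    proof (rule equicontinuous_limits_agree[OF M(2) F'(2), where s="\<lambda>t. -t"])
      show "((\<lambda>t. act t x) \<longlongrightarrow> y) F'" using lim F'(1) by (rule tendsto_mono[rotated])
      show "((\<lambda>t. act (- t) (act t x)) \<longlongrightarrow> x) F'" by simp
    qed (use F'(3) y M_inv x in auto)
    with F'(4) show False by simp
  qed
qed

text \<open>Take a minimal \<open>M\<close> in the orbit closure of \<open>x\<close>, a net with \<open>t\<^sub>i x \<rightarrow> m \<in> M\<close>, and a subnet with
  \<open>-t\<^sub>i m \<rightarrow> y \<in> M\<close> and \<open>t\<^sub>i y \<rightarrow> d\<close>.  Equicontinuity gives \<open>d = m\<close>, so \<open>x\<close> and \<open>y\<close> are proximal,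
  and distality forces \<open>x = y \<in> M\<close>.\<close>

lemma distal_equicontinuous_in_minimal:
  assumes distal: "distal_flow act"
    and equi: "\<And>M. minimal_set act M \<Longrightarrow> equicontinuous_on act M"
  obtains M where "minimal_set act M" "x \<in> M"
proof -
  let ?S = "closure (range (\<lambda>t. act t x))"
  have "closed_invariant ?S"
    unfolding closed_invariant_def using orbit_closure_invariant by auto
  then obtain M where M: "M \<subseteq> ?S" "minimal_set act M" by (rule exists_minimal_subset)
  have M_closed: "closed M" and M_inv: "\<And>t y. y \<in> M \<Longrightarrow> act t y \<in> M" and "M \<noteq> {}"
    using M(2) unfolding minimal_set_def by auto
  then obtain m where m: "m \<in> M" by blast
  define F0 where "F0 = filtercomap (\<lambda>t. act t x) (nhds m)"
  have F0: "F0 \<noteq> bot" "((\<lambda>t. act t x) \<longlongrightarrow> m) F0"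
    unfolding F0_def using closure_range_net M(1) m by blast+
  obtain y F1 where F1: "F1 \<le> F0" "F1 \<noteq> bot" "((\<lambda>t. act (-t) m) \<longlongrightarrow> y) F1"
    using convergent_refinement[OF compact_space F0(1)] .
  have y: "y \<in> M" using Lim_in_closed_set[OF M_closed _ F1(2,3)] M_inv m by auto
  obtain d F2 where F2: "F2 \<le> F1" "F2 \<noteq> bot" "((\<lambda>t. act t y) \<longlongrightarrow> d) F2"
    using convergent_refinement[OF compact_space F1(2)] .
  have "m = d"
  proof (rule equicontinuous_limits_agree[OF equi[OF M(2)] F2(2), where s="\<lambda>t. t"])
    show "((\<lambda>t. act (-t) m) \<longlongrightarrow> y) F2" using F1(3) F2(1) by (rule tendsto_mono[rotated])
    show "((\<lambda>t. act t (act (- t) m)) \<longlongrightarrow> m) F2" by (simp flip: act_add)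
  qed (use F2(3) y M_inv m in auto)
  moreover have "((\<lambda>t. act t x) \<longlongrightarrow> m) F2"
    using F0(2) F1(1) F2(1) by (blast intro: tendsto_mono order_trans)
  ultimately have "x = y"
    using distal F2 unfolding distal_flow_def by blast
  then show ?thesis using that M(2) y by blast
qed

theorem distal_equicontinuous_imp_almost_automorphic:
  assumes "distal_flow act" "\<And>M. minimal_set act M \<Longrightarrow> equicontinuous_on act M"
  shows "almost_automorphic_point act x"
  using distal_equicontinuous_in_minimal[OF assms]
  by (metis assms(2) equicontinuous_minimal_almost_automorphic)

end

section \<open>The enveloping semigroup of a flow in which every point is almost automorphic\<close>

locale aa_flow = flow act for act :: "'g::topological_group_add \<Rightarrow> 'x::t2_space \<Rightarrow> 'x" +
  assumes almost_automorphic: "\<And>x. almost_automorphic_point act x"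
begin

definition Env :: "('x \<Rightarrow> 'x) set" where "Env = closure (range act)"

lemma closed_Env: "closed Env"
  by (simp add: Env_def)

lemma compact_Env: "compact Env"
  using compact_Int_closed[OF compact_UNIV_fun[OF compact_space] closed_Env] by simp

lemma continuous_on_eval: "continuous_on UNIV (\<lambda>g::'x \<Rightarrow> 'x. g p)"
  by simp

lemma act_in_Env: "act t \<in> Env"
  unfolding Env_def by (rule closure_subset[THEN subsetD]) simp

text \<open>If \<open>act t \<rightarrow> e\<close> and \<open>act (-t) \<rightarrow> c\<close> along the same net, then \<open>c\<close> and \<open>e\<close> are mutually inverse:
  this is exactly almost automorphy of every point (applied to \<open>x\<close> and to \<open>c y\<close>).\<close>

lemma inverse_from_net:
  assumes F: "F \<noteq> bot" and le: "(act \<longlongrightarrow> e) F" and lc: "((\<lambda>t. act (-t)) \<longlongrightarrow> c) F"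
  shows "c (e x) = x" and "e (c y) = y"
proof -
  have "((\<lambda>t. act t x) \<longlongrightarrow> e x) F" using le by (simp add: tendsto_fun_iff)
  then have "((\<lambda>t. act (-t) (e x)) \<longlongrightarrow> x) F"
    by (rule almost_automorphic_pointD[OF almost_automorphic F])
  moreover have "((\<lambda>t. act (-t) (e x)) \<longlongrightarrow> c (e x)) F" using lc by (simp add: tendsto_fun_iff)
  ultimately show "c (e x) = x" using F tendsto_unique by blast
next
  have G: "filtermap uminus F \<noteq> bot" using F by (simp add: filtermap_bot_iff)
  have "((\<lambda>t. act (-t) y) \<longlongrightarrow> c y) F" using lc by (simp add: tendsto_fun_iff)
  then have "((\<lambda>s. act s y) \<longlongrightarrow> c y) (filtermap uminus F)"
    by (simp add: filterlim_filtermap)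
  then have "((\<lambda>s. act (-s) (c y)) \<longlongrightarrow> y) (filtermap uminus F)"
    by (rule almost_automorphic_pointD[OF almost_automorphic G])
  then have "((\<lambda>t. act t (c y)) \<longlongrightarrow> y) F" by (simp add: filterlim_filtermap)
  moreover have "((\<lambda>t. act t (c y)) \<longlongrightarrow> e (c y)) F" using le by (simp add: tendsto_fun_iff)
  ultimately show "e (c y) = y" using F tendsto_unique by blast
qed

lemma Env_net:
  assumes "e \<in> Env"
  obtains c F where "c \<in> Env" "F \<noteq> bot" "(act \<longlongrightarrow> e) F" "((\<lambda>t. act (-t)) \<longlongrightarrow> c) F"
proof -
  define F0 where "F0 = filtercomap act (nhds e)"
  have F0: "F0 \<noteq> bot" "(act \<longlongrightarrow> e) F0"
    unfolding F0_def using closure_range_net assms by (auto simp: Env_def)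
  obtain c F where F: "F \<le> F0" "F \<noteq> bot" "((\<lambda>t. act (-t)) \<longlongrightarrow> c) F"
    using convergent_refinement[OF compact_UNIV_fun[OF compact_space] F0(1)] .
  have "c \<in> Env" using Lim_in_closed_set[OF closed_Env _ F(2,3)] by (simp add: act_in_Env)
  then show ?thesis using that F F0(2) tendsto_mono by blast
qed

definition env_inv :: "('x \<Rightarrow> 'x) \<Rightarrow> ('x \<Rightarrow> 'x)" where
  "env_inv e = (SOME c. c \<in> Env \<and> (\<forall>x. c (e x) = x) \<and> (\<forall>y. e (c y) = y))"

lemma env_inv:
  assumes "e \<in> Env"
  shows "env_inv e \<in> Env" "env_inv e (e x) = x" "e (env_inv e y) = y"
proof -
  obtain c F where "c \<in> Env" "F \<noteq> bot" "(act \<longlongrightarrow> e) F" "((\<lambda>t. act (-t)) \<longlongrightarrow> c) F"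
    using Env_net[OF assms] .
  then have "\<exists>c. c \<in> Env \<and> (\<forall>x. c (e x) = x) \<and> (\<forall>y. e (c y) = y)"
    using inverse_from_net by blast
  from someI_ex[OF this] show "env_inv e \<in> Env" "env_inv e (e x) = x" "e (env_inv e y) = y"
    unfolding env_inv_def by auto
qed

lemma env_inv_unique:
  assumes "e \<in> Env" "\<And>x. c (e x) = x"
  shows "c = env_inv e"
proof
  fix y
  have "c y = c (e (env_inv e y))" using env_inv(3)[OF assms(1)] by simp
  then show "c y = env_inv e y" using assms(2) by simp
qed

text \<open>\<open>Env\<close> is a semigroup: composition is continuous in each variable separately
  (on the right always, on the left by continuity of \<open>act t\<close>).\<close>

lemma continuous_on_comp_left_act: "continuous_on UNIV (\<lambda>g::'x \<Rightarrow> 'x. act t \<circ> g)"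
  by (intro continuous_on_coordinatewise_then_product)
    (auto simp: o_def intro: continuous_on_compose2[OF continuous_on_act])

lemma continuous_on_comp_right: "continuous_on UNIV (\<lambda>g::'x \<Rightarrow> 'x. g \<circ> h)"
  by (rule continuous_on_coordinatewise_then_product) (simp add: o_def)

lemma act_comp_Env:
  assumes "h \<in> Env" shows "act t \<circ> h \<in> Env"
proof -
  have "(\<lambda>g. act t \<circ> g) ` closure (range act) \<subseteq> Env"
  proof (rule image_closure_subset[OF _ closed_Env])
    show "continuous_on (closure (range act)) (\<lambda>g. act t \<circ> g)"
      by (rule continuous_on_subset[OF continuous_on_comp_left_act]) simp
    have "act t \<circ> act s = act (t + s)" for s by (auto simp: act_add)
    then show "(\<lambda>g. act t \<circ> g) ` range act \<subseteq> Env" using act_in_Env by auto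
  qed
  then show ?thesis using assms unfolding Env_def by blast
qed

lemma comp_Env:
  assumes "g \<in> Env" "h \<in> Env" shows "g \<circ> h \<in> Env"
proof -
  have "(\<lambda>g. g \<circ> h) ` closure (range act) \<subseteq> Env"
  proof (rule image_closure_subset[OF _ closed_Env])
    show "continuous_on (closure (range act)) (\<lambda>g. g \<circ> h)"
      by (rule continuous_on_subset[OF continuous_on_comp_right]) simp
    show "(\<lambda>g. g \<circ> h) ` range act \<subseteq> Env" using act_comp_Env[OF assms(2)] by auto
  qed
  then show ?thesis using assms unfolding Env_def by blast
qed

lemma env_inv_comp:
  assumes "g \<in> Env" "h \<in> Env"
  shows "env_inv (g \<circ> h) = env_inv h \<circ> env_inv g"
  by (rule env_inv_unique[symmetric]) (use assms comp_Env env_inv in auto)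

lemma env_inv_env_inv: "e \<in> Env \<Longrightarrow> env_inv (env_inv e) = e"
  by (rule env_inv_unique[symmetric]) (use env_inv in auto)

text \<open>The graph of \<open>env_inv\<close> is closed: if \<open>g\<^sub>i \<rightarrow> e\<close> in \<open>Env\<close> and \<open>env_inv g\<^sub>i \<rightarrow> c\<close>, then nets
  approximating the \<open>g\<^sub>i\<close> by translations yield a single net with \<open>act t \<rightarrow> e\<close> and
  \<open>act (-t) \<rightarrow> c\<close>, so \<open>c = env_inv e\<close>.\<close>

lemma env_inv_graph_closed:
  assumes G: "G \<noteq> bot" and G_Env: "eventually (\<lambda>g. g \<in> Env) G" and "e \<in> Env"
    and lim_e: "((\<lambda>g. g) \<longlongrightarrow> e) G" and lim_c: "(env_inv \<longlongrightarrow> c) G"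
  shows "c = env_inv e"
proof -
  define H where "H = inf (filtercomap act (nhds e)) (filtercomap (\<lambda>t. act (-t)) (nhds c))"
  have "H \<noteq> bot"
  proof
    assume "H = bot"
    then have "eventually (\<lambda>t. False) H" by simp
    then obtain P Q where P: "eventually P (filtercomap act (nhds e))"
      and Q: "eventually Q (filtercomap (\<lambda>t. act (-t)) (nhds c))" and PQ: "\<And>t. P t \<Longrightarrow> Q t \<Longrightarrow> False"
      unfolding H_def eventually_inf by blast
    obtain S S' where S: "open S" "e \<in> S" "\<And>t. act t \<in> S \<Longrightarrow> P t"
      and S': "open S'" "c \<in> S'" "\<And>t. act (-t) \<in> S' \<Longrightarrow> Q t"
      using P Q unfolding eventually_filtercomap eventually_nhds by metis
    have "eventually (\<lambda>g. g \<in> Env \<and> g \<in> S \<and> env_inv g \<in> S') G"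
      using G_Env topological_tendstoD[OF lim_e S(1,2)] topological_tendstoD[OF lim_c S'(1,2)]
      by eventually_elim blast
    then obtain g where g: "g \<in> Env" "g \<in> S" "env_inv g \<in> S'"
      using G eventually_happens by blast
    obtain c' F where F: "F \<noteq> bot" "(act \<longlongrightarrow> g) F" "((\<lambda>t. act (-t)) \<longlongrightarrow> c') F"
      using Env_net[OF g(1)] by blast
    have "c' = env_inv g" using env_inv_unique[OF g(1)] inverse_from_net(1)[OF F] by blast
    then have c': "c' \<in> S'" using g(3) by simp
    have "eventually (\<lambda>t. act t \<in> S \<and> act (-t) \<in> S') F"
      using topological_tendstoD[OF F(2) S(1) g(2)] topological_tendstoD[OF F(3) S'(1) c']
      by eventually_elim blast
    then show False using F(1) eventually_happens S(3) S'(3) PQ by blast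
  qed
  moreover have "(act \<longlongrightarrow> e) H" "((\<lambda>t. act (-t)) \<longlongrightarrow> c) H"
    unfolding H_def by (auto intro: tendsto_mono[OF _ filterlim_filtercomap])
  ultimately show ?thesis using env_inv_unique[OF \<open>e \<in> Env\<close>] inverse_from_net(1) by blast
qed

text \<open>A map into a compact space with closed graph is continuous: inversion is continuous on
  \<open>Env\<close>, which therefore is a compact semitopological group.\<close>

lemma continuous_on_env_inv: "continuous_on Env env_inv"
  unfolding continuous_on_def
proof
  fix e assume e: "e \<in> Env"
  show "(env_inv \<longlongrightarrow> env_inv e) (at e within Env)"
  proof (rule ccontr)
    assume "\<not> (env_inv \<longlongrightarrow> env_inv e) (at e within Env)"
    moreover have "at e within Env \<noteq> bot"
      using calculation by (metis tendsto_bot)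
    ultimately obtain c G where G: "G \<le> at e within Env" "G \<noteq> bot" "(env_inv \<longlongrightarrow> c) G"
      "c \<noteq> env_inv e"
      using not_tendsto_other_limit[OF compact_UNIV_fun[OF compact_space]] by blast
    have "eventually (\<lambda>g. g \<in> Env) G"
      using G(1) by (rule filter_leD) (simp add: eventually_at_filter)
    moreover have "((\<lambda>g. g) \<longlongrightarrow> e) G"
      using G(1) tendsto_ident_at by (rule tendsto_mono)
    ultimately have "c = env_inv e" using env_inv_graph_closed G(2,3) e by blast
    with G(4) show False ..
  qed
qed

text \<open>Left multiplication by \<open>e\<close> is continuous on \<open>Env\<close>, as \<open>e \<circ> g = (g\<inverse> \<circ> e\<inverse>)\<inverse>\<close>.\<close>

lemma continuous_on_comp_left:
  assumes e: "e \<in> Env"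
  shows "continuous_on Env (\<lambda>g. e \<circ> g)"
proof -
  have "continuous_on Env (env_inv \<circ> (\<lambda>g. g \<circ> env_inv e) \<circ> env_inv)"
  proof (intro continuous_on_compose)
    show "continuous_on Env env_inv" by (rule continuous_on_env_inv)
    show "continuous_on (env_inv ` Env) (\<lambda>g. g \<circ> env_inv e)"
      by (rule continuous_on_subset[OF continuous_on_comp_right]) simp
    show "continuous_on ((\<lambda>g. g \<circ> env_inv e) ` env_inv ` Env) env_inv"
      by (rule continuous_on_subset[OF continuous_on_env_inv]) (use e env_inv comp_Env in auto)
  qed
  moreover have "e \<circ> g = env_inv (env_inv g \<circ> env_inv e)" if "g \<in> Env" for g
    using that e by (simp add: env_inv_comp env_inv env_inv_env_inv)
  ultimately show ?thesis by (auto intro: continuous_on_cong[THEN iffD1, rotated 2])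
qed

lemma minimal_eval_image:
  assumes M: "minimal_set act M" and p: "p \<in> M"
  shows "(\<lambda>g. g p) ` Env = M"
proof
  have M_closed: "closed M" and "\<And>t y. y \<in> M \<Longrightarrow> act t y \<in> M"
    and orbit: "closure (range (\<lambda>t. act t p)) = M"
    using M p unfolding minimal_set_def by auto
  then show "(\<lambda>g. g p) ` Env \<subseteq> M"
    unfolding Env_def using p
    by (intro image_closure_subset continuous_on_subset[OF continuous_on_eval]) auto
  have "compact ((\<lambda>g. g p) ` Env)"
    by (intro compact_continuous_image compact_Env continuous_on_subset[OF continuous_on_eval]) simp
  moreover have "range (\<lambda>t. act t p) \<subseteq> (\<lambda>g. g p) ` Env" using act_in_Env by auto
  ultimately show "M \<subseteq> (\<lambda>g. g p) ` Env" using orbit by (metis closure_minimal compact_imp_closed)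
qed

text \<open>Consequently each \<open>e \<in> Env\<close> is continuous on every minimal set: preimages of closed sets
  under \<open>e\<close> are images of compact subsets of \<open>Env\<close> under evaluation.\<close>

lemma continuous_on_minimal:
  assumes M: "minimal_set act M" and e: "e \<in> Env"
  shows "continuous_on M e"
proof -
  obtain p where p: "p \<in> M" using M unfolding minimal_set_def by auto
  have M_closed: "closed M" using M unfolding minimal_set_def by auto
  have "continuous_on Env ((\<lambda>g. g p) \<circ> (\<lambda>g. e \<circ> g))"
    by (intro continuous_on_compose continuous_on_comp_left[OF e]
        continuous_on_subset[OF continuous_on_eval]) simp
  then have cont: "continuous_on Env (\<lambda>g. e (g p))" by (simp add: o_def)
  show ?thesis
    unfolding continuous_on_closed_vimage[OF M_closed]
  proof (intro allI impI)
    fix B :: "'x set" assume B: "closed B"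
    have "e -` B \<inter> M = (\<lambda>g. g p) ` (Env \<inter> (\<lambda>g. e (g p)) -` B)"
      using minimal_eval_image[OF M p] by auto
    moreover have "compact (Env \<inter> (\<lambda>g. e (g p)) -` B)"
      using continuous_closed_preimage[OF cont closed_Env B] compact_Env
      by (metis compact_Int_closed inf.absorb_iff2 inf_le1)
    then have "compact ((\<lambda>g. g p) ` (Env \<inter> (\<lambda>g. e (g p)) -` B))"
      by (intro compact_continuous_image continuous_on_subset[OF continuous_on_eval]) simp_all
    ultimately show "closed (e -` B \<inter> M)" by (simp add: compact_imp_closed)
  qed
qed

end

section \<open>Cantor schemes in minimal sets of almost automorphic flows\<close>

text \<open>Iterating the halving
  along all infinite branches yields a separated family of points indexed by \<open>2\<^sup>\<nat>\<close>.  We show that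
  the assumptions of this locale are contradictory: uncountably many separated points cannot
  coexist with the continuity of all elements of \<open>Env\<close> on \<open>M\<close>.\<close>

locale cantor_scheme = aa_flow act for act :: "'g::topological_group_add \<Rightarrow> 'x::t2_space \<Rightarrow> 'x" +
  fixes M :: "'x set" and \<phi> :: "nat \<Rightarrow> 'x \<Rightarrow> real" and r :: nat
    and half :: "'x set \<Rightarrow> bool \<Rightarrow> 'x set"
    and sep_time :: "'x set \<Rightarrow> 'g" and sep_index :: "'x set \<Rightarrow> nat"
  assumes minimal: "minimal_set act M"
    and \<phi>_cont: "\<And>i. continuous_on UNIV (\<phi> i)" and \<phi>_range: "\<And>i x. \<phi> i x \<in> {0..1}"
    and half_open: "\<And>V b. open V \<Longrightarrow> V \<inter> M \<noteq> {} \<Longrightarrow> open (half V b)"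
    and half_subset: "\<And>V b. half V b \<subseteq> V"
    and half_meets: "\<And>V b. open V \<Longrightarrow> V \<inter> M \<noteq> {} \<Longrightarrow> half V b \<inter> M \<noteq> {}"
    and halves_separated: "\<And>V z z'. open V \<Longrightarrow> V \<inter> M \<noteq> {} \<Longrightarrow> z \<in> closure (half V True) \<Longrightarrow>
        z' \<in> closure (half V False) \<Longrightarrow>
        sep_index V < r \<and> \<bar>\<phi> (sep_index V) (act (sep_time V) z) - \<phi> (sep_index V) (act (sep_time V) z')\<bar> \<ge> 1/6"
begin

lemma closed_M: "closed M" and M_nonempty: "M \<noteq> {}"
  using minimal unfolding minimal_set_def by auto

text \<open>The node of the scheme addressed by a finite word (most recent choice first).\<close>

primrec node :: "bool list \<Rightarrow> 'x set" where
  "node [] = UNIV"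
| "node (b # s) = half (node s) b"

lemma node_open_meets: "open (node s) \<and> node s \<inter> M \<noteq> {}"
  by (induction s) (use M_nonempty half_open half_meets in auto)

definition node_point :: "bool list \<Rightarrow> 'x" where
  "node_point s = (SOME x. x \<in> node s \<inter> M)"

lemma node_point: "node_point s \<in> node s" "node_point s \<in> M"
proof -
  have "node_point s \<in> node s \<inter> M"
    unfolding node_point_def by (rule someI_ex) (use node_open_meets in blast)
  then show "node_point s \<in> node s" "node_point s \<in> M" by auto
qed

definition path :: "(nat \<Rightarrow> bool) \<Rightarrow> nat \<Rightarrow> bool list" where
  "path \<sigma> n = rev (map \<sigma> [0..<n])"

lemma path_simps [simp]: "path \<sigma> 0 = []" "path \<sigma> (Suc n) = \<sigma> n # path \<sigma> n"
  by (simp_all add: path_def)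

lemma path_eq: "(\<And>k. k < n \<Longrightarrow> \<sigma> k = \<tau> k) \<Longrightarrow> path \<sigma> n = path \<tau> n"
  unfolding path_def by (simp add: map_equality_iff)

lemma node_path_mono: "n \<le> m \<Longrightarrow> node (path \<sigma> m) \<subseteq> node (path \<sigma> n)"
  by (induction m rule: dec_induct) (use half_subset in \<open>auto intro: order_trans\<close>)

text \<open>The node points of a branch from level \<open>n\<close> on; their closures are nested, nonempty and
  compact, so they have a common point, the branch point.\<close>

definition tail :: "(nat \<Rightarrow> bool) \<Rightarrow> nat \<Rightarrow> 'x set" where
  "tail \<sigma> n = {node_point (path \<sigma> m) | m. n \<le> m}"

lemma tail_subset_node: "tail \<sigma> n \<subseteq> node (path \<sigma> n)"
  unfolding tail_def using node_point(1) node_path_mono by blast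

lemma branch_point_exists: "\<exists>z. z \<in> (\<Inter>n. closure (tail \<sigma> n))"
proof -
  have "UNIV \<inter> \<Inter> (range (\<lambda>n. closure (tail \<sigma> n))) \<noteq> {}"
  proof (rule compact_imp_fip[OF compact_space])
    fix F' assume F': "finite F'" "F' \<subseteq> range (\<lambda>n. closure (tail \<sigma> n))"
    then obtain I where I: "finite I" "F' = (\<lambda>n. closure (tail \<sigma> n)) ` I"
      using finite_subset_image by metis
    define N where "N = Max (insert 0 I)"
    have "closure (tail \<sigma> N) \<subseteq> closure (tail \<sigma> n)" if "n \<in> I" for n
      using that I(1) by (intro closure_mono) (auto simp: tail_def N_def)
    moreover have "node_point (path \<sigma> N) \<in> tail \<sigma> N" unfolding tail_def by blast
    ultimately show "UNIV \<inter> \<Inter> F' \<noteq> {}" unfolding I(2) using closure_subset by blast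
  qed auto
  then show ?thesis by auto
qed

definition branch_point :: "(nat \<Rightarrow> bool) \<Rightarrow> 'x" where
  "branch_point \<sigma> = (SOME z. z \<in> (\<Inter>n. closure (tail \<sigma> n)))"

lemma branch_point_in_tail: "branch_point \<sigma> \<in> closure (tail \<sigma> n)"
  using someI_ex[OF branch_point_exists] unfolding branch_point_def by blast

lemma branch_point_in_node: "branch_point \<sigma> \<in> closure (node (path \<sigma> n))"
  using branch_point_in_tail closure_mono[OF tail_subset_node] by blast

lemma branch_point_in_closure_node_points: "branch_point \<sigma> \<in> closure (range node_point)"
proof -
  have "tail \<sigma> 0 \<subseteq> range node_point" unfolding tail_def by blast
  then show ?thesis using branch_point_in_tail[of \<sigma> 0] closure_mono by blast
qed

text \<open>Branch points of different branches are separated by some translation: at the first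
  level where the branches split, they lie in the closures of the two different halves.\<close>

lemma branch_points_separated:
  assumes "\<sigma> \<noteq> \<tau>"
  obtains t i where "i < r" "\<bar>\<phi> i (act t (branch_point \<sigma>)) - \<phi> i (act t (branch_point \<tau>))\<bar> \<ge> 1/6"
proof -
  define k where "k = (LEAST k. \<sigma> k \<noteq> \<tau> k)"
  have k: "\<sigma> k \<noteq> \<tau> k" unfolding k_def by (rule LeastI_ex) (use assms in auto)
  have "path \<sigma> k = path \<tau> k" using not_less_Least[of _ "\<lambda>k. \<sigma> k \<noteq> \<tau> k"] unfolding k_def
    by (intro path_eq) blast
  then have z: "branch_point \<sigma> \<in> closure (half (node (path \<sigma> k)) (\<sigma> k))"
    "branch_point \<tau> \<in> closure (half (node (path \<sigma> k)) (\<tau> k))"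
    using branch_point_in_node[of _ "Suc k"] by (metis node.simps(2) path_simps(2))+
  define V where "V = node (path \<sigma> k)"
  have V: "open V" "V \<inter> M \<noteq> {}" unfolding V_def using node_open_meets by auto
  show ?thesis
  proof (cases "\<sigma> k")
    case True
    then have "sep_index V < r \<and> \<bar>\<phi> (sep_index V) (act (sep_time V) (branch_point \<sigma>)) -
        \<phi> (sep_index V) (act (sep_time V) (branch_point \<tau>))\<bar> \<ge> 1/6"
      using halves_separated[OF V] z k unfolding V_def by auto
    then show ?thesis using that by blast
  next
    case False
    then have "sep_index V < r \<and> \<bar>\<phi> (sep_index V) (act (sep_time V) (branch_point \<tau>)) -
        \<phi> (sep_index V) (act (sep_time V) (branch_point \<sigma>))\<bar> \<ge> 1/6"
      using halves_separated[OF V] z k unfolding V_def by auto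
    then show ?thesis using that by (metis abs_minus_commute)
  qed
qed

text \<open>Countably many coordinates \<open>\<phi> i (g (node_point s))\<close> embed \<open>Env\<close> continuously into the
  metrizable space \<open>\<real>\<^bsup>\<nat>\<times>\<nat>\<^esup>\<close>.\<close>

definition coords :: "('x \<Rightarrow> 'x) \<Rightarrow> (nat \<times> nat \<Rightarrow> real)" where
  "coords g = (\<lambda>(i, k). \<phi> i (g (node_point (from_nat k))))"

lemma continuous_on_phi_eval: "continuous_on UNIV (\<lambda>g::'x \<Rightarrow> 'x. \<phi> i (g z))"
  by (rule continuous_on_compose2[OF \<phi>_cont continuous_on_eval]) auto

lemma continuous_on_coords: "continuous_on UNIV coords"
  unfolding coords_def by (intro continuous_on_coordinatewise_then_product) (auto intro: continuous_on_phi_eval)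

text \<open>Since elements of \<open>Env\<close> are continuous on \<open>M\<close>, the coordinates determine their values at
  branch points, which are limits of node points.\<close>

lemma coords_determine_branch_values:
  assumes g: "g \<in> Env" and g': "g' \<in> Env" and eq: "coords g = coords g'"
  shows "\<phi> i (g (branch_point \<sigma>)) = \<phi> i (g' (branch_point \<sigma>))"
proof -
  let ?h = "\<lambda>x. \<phi> i (g x) - \<phi> i (g' x)"
  have "continuous_on M ?h"
    using g g' by (intro continuous_on_diff continuous_on_compose2[OF \<phi>_cont continuous_on_minimal[OF minimal]]) auto
  then have closed: "closed (M \<inter> ?h -` {0})" by (rule continuous_closed_preimage[OF _ closed_M]) simp
  have "?h (node_point s) = 0" for s
    using fun_cong[OF eq, of "(i, to_nat s)"] by (simp add: coords_def)
  then have "range node_point \<subseteq> M \<inter> ?h -` {0}" using node_point(2) by auto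
  then have "closure (range node_point) \<subseteq> M \<inter> ?h -` {0}" using closed closure_minimal by blast
  then have "?h (branch_point \<sigma>) = 0" using branch_point_in_closure_node_points by blast
  then show ?thesis by simp
qed

definition uniform_modulus :: "real \<Rightarrow> (nat \<Rightarrow> bool) \<Rightarrow> bool" where
  "uniform_modulus \<delta> \<sigma> \<longleftrightarrow> (\<forall>g\<in>Env. \<forall>g'\<in>Env. dist (coords g) (coords g') < \<delta> \<longrightarrow>
      (\<forall>i<r. \<bar>\<phi> i (g (branch_point \<sigma>)) - \<phi> i (g' (branch_point \<sigma>))\<bar> < 1/24))"

text \<open>A modulus exists by compactness: the pairs violating the conclusion form a compact subset
  of \<open>Env \<times> Env\<close> on which the continuous distance of coordinates is positive.\<close>

lemma uniform_modulus_exists: "\<exists>\<delta>>0. uniform_modulus \<delta> \<sigma>"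
proof -
  define z where "z = branch_point \<sigma>"
  define S where "S = (Env \<times> Env) \<inter> (\<Union>i\<in>{..<r}. {p. 1/24 \<le> \<bar>\<phi> i (fst p z) - \<phi> i (snd p z)\<bar>})"
  define f where "f p = dist (coords (fst p)) (coords (snd p))" for p :: "('x \<Rightarrow> 'x) \<times> ('x \<Rightarrow> 'x)"
  have modulus: "uniform_modulus \<delta> \<sigma>" if below: "\<And>p. p \<in> S \<Longrightarrow> \<delta> \<le> f p" for \<delta>
    unfolding uniform_modulus_def
  proof (intro ballI impI allI)
    fix g g' i assume g: "g \<in> Env" "g' \<in> Env" and "dist (coords g) (coords g') < \<delta>" "i < r"
    then have "(g, g') \<notin> S" using below[of "(g, g')"] by (auto simp: f_def)
    then show "\<bar>\<phi> i (g (branch_point \<sigma>)) - \<phi> i (g' (branch_point \<sigma>))\<bar> < 1/24"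
      using g \<open>i < r\<close> unfolding S_def z_def by (auto simp: not_le)
  qed
  show ?thesis
  proof (cases "S = {}")
    case True
    then show ?thesis using modulus[of 1] zero_less_one by blast
  next
    case False
    have "closed {p. 1/24 \<le> \<bar>\<phi> i (fst p z) - \<phi> i (snd p z)\<bar>}" for i
      by (intro closed_Collect_le continuous_intros continuous_on_compose2[OF continuous_on_phi_eval]) auto
    then have "compact S"
      unfolding S_def by (intro compact_Int_closed compact_Times compact_Env closed_UN) auto
    moreover have "continuous_on S f"
      unfolding f_def by (intro continuous_intros continuous_on_compose2[OF continuous_on_coords]) auto
    ultimately obtain p0 where p0: "p0 \<in> S" "\<And>p. p \<in> S \<Longrightarrow> f p0 \<le> f p"
      using continuous_attains_inf[OF _ False] by blast
    obtain g g' where p0_eq: "p0 = (g, g')" by (cases p0)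
    obtain i where g: "g \<in> Env" "g' \<in> Env" and "i < r"
      and far: "1/24 \<le> \<bar>\<phi> i (g z) - \<phi> i (g' z)\<bar>"
      using p0(1) unfolding S_def p0_eq by auto
    have "f p0 > 0"
    proof (rule ccontr)
      assume "\<not> f p0 > 0"
      then have "coords g = coords g'" unfolding f_def p0_eq by simp
      then have "\<phi> i (g z) = \<phi> i (g' z)"
        unfolding z_def by (rule coords_determine_branch_values[OF g])
      with far show False by simp
    qed
    then show ?thesis using modulus p0(2) by blast
  qed
qed

text \<open>There are uncountably many branches, so infinitely many share a common modulus.\<close>

lemma infinitely_many_branches_common_modulus:
  obtains \<delta> where "\<delta> > 0" "infinite {\<sigma>. uniform_modulus \<delta> \<sigma>}"
proof -
  have mono: "uniform_modulus \<delta> \<sigma>" if "uniform_modulus \<delta>' \<sigma>" "\<delta> \<le> \<delta>'" for \<delta> \<delta>' \<sigma>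
    using that unfolding uniform_modulus_def by force
  have "\<exists>n. uniform_modulus (inverse (real (Suc n))) \<sigma>" for \<sigma>
  proof -
    obtain \<delta> where "\<delta> > 0" "uniform_modulus \<delta> \<sigma>" using uniform_modulus_exists by blast
    moreover obtain n where "inverse (real (Suc n)) < \<delta>" using reals_Archimedean[OF \<open>\<delta> > 0\<close>] by blast
    ultimately show ?thesis using mono by (meson less_le)
  qed
  then have UNIV_eq: "(\<Union>n. {\<sigma>. uniform_modulus (inverse (real (Suc n))) \<sigma>}) = UNIV" by blast
  have "\<exists>n. infinite {\<sigma>. uniform_modulus (inverse (real (Suc n))) \<sigma>}"
  proof (rule ccontr)
    assume "\<nexists>n. infinite {\<sigma>. uniform_modulus (inverse (real (Suc n))) \<sigma>}"
    then have "countable (\<Union>n. {\<sigma>. uniform_modulus (inverse (real (Suc n))) \<sigma>})"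
      by (intro countable_UN) (auto intro: countable_finite)
    with uncountable_nat_bool show False unfolding UNIV_eq by simp
  qed
  then obtain n where "infinite {\<sigma>. uniform_modulus (inverse (real (Suc n))) \<sigma>}" ..
  then show ?thesis using that[of "inverse (real (Suc n))"] by simp
qed

lemma finite_coords_net:
  assumes "\<delta> > 0"
  obtains G0 where "finite G0" "G0 \<subseteq> Env" "\<And>g. g \<in> Env \<Longrightarrow> \<exists>g0\<in>G0. dist (coords g) (coords g0) < \<delta>"
proof -
  have "compact (coords ` Env)"
    by (rule compact_continuous_image[OF continuous_on_subset[OF continuous_on_coords] compact_Env]) simp
  moreover have "coords ` Env \<subseteq> (\<Union>g\<in>Env. ball (coords g) \<delta>)" using assms by auto
  ultimately obtain G0 where "G0 \<subseteq> Env" "finite G0" "coords ` Env \<subseteq> (\<Union>g\<in>G0. ball (coords g) \<delta>)"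
    using compactE_image[of "coords ` Env" Env "\<lambda>g. ball (coords g) \<delta>"] by blast
  then show ?thesis using that by (fastforce simp: dist_commute)
qed

text \<open>Pigeonhole principle: finitely many coordinates, each rounded to a multiple of \<open>1/24\<close>,
  cannot distinguish infinitely many branch points.\<close>

lemma pigeonhole_branches:
  assumes "infinite \<Sigma>" "finite G0"
  obtains \<sigma> \<tau> where "\<sigma> \<in> \<Sigma>" "\<tau> \<in> \<Sigma>" "\<sigma> \<noteq> \<tau>"
    "\<And>i g. i < r \<Longrightarrow> g \<in> G0 \<Longrightarrow> \<bar>\<phi> i (g (branch_point \<sigma>)) - \<phi> i (g (branch_point \<tau>))\<bar> < 1/24"
proof -
  define cell where
    "cell \<sigma> = restrict (\<lambda>(i, g). \<lfloor>24 * \<phi> i (g (branch_point \<sigma>))\<rfloor>) ({..<r} \<times> G0)" for \<sigma>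
  have "\<lfloor>24 * \<phi> i x\<rfloor> \<in> {0..24}" for i x
    using \<phi>_range[of i x] by (simp add: floor_le_iff)
  then have "cell \<sigma> \<in> Pi\<^sub>E ({..<r} \<times> G0) (\<lambda>_. {0..24::int})" for \<sigma>
    by (auto simp: cell_def)
  moreover have "finite (Pi\<^sub>E ({..<r} \<times> G0) (\<lambda>_. {0..24::int}))"
    using assms(2) by (intro finite_PiE) auto
  ultimately have "\<not> inj_on cell \<Sigma>"
    using assms(1) by (metis finite_imageD finite_subset image_subsetI)
  then obtain \<sigma> \<tau> where "\<sigma> \<in> \<Sigma>" "\<tau> \<in> \<Sigma>" "\<sigma> \<noteq> \<tau>" "cell \<sigma> = cell \<tau>"
    unfolding inj_on_def by blast
  moreover have "\<bar>\<phi> i (g (branch_point \<sigma>)) - \<phi> i (g (branch_point \<tau>))\<bar> < 1/24"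
    if "cell \<sigma> = cell \<tau>" "i < r" "g \<in> G0" for i g
  proof -
    have "\<lfloor>24 * \<phi> i (g (branch_point \<sigma>))\<rfloor> = \<lfloor>24 * \<phi> i (g (branch_point \<tau>))\<rfloor>"
      using fun_cong[OF that(1), of "(i, g)"] that(2,3) by (simp add: cell_def)
    then show ?thesis by linarith
  qed
  ultimately show ?thesis using that by blast
qed

text \<open>The contradiction: two branches with a common modulus \<open>\<delta>\<close> that are indistinguishable
  on a \<open>\<delta>\<close>-net would be \<open>1/8\<close>-close under every translation, yet some translation separates
  them by \<open>1/6\<close>.\<close>

theorem no_cantor_scheme: False
proof -
  obtain \<delta> where \<delta>: "\<delta> > 0" "infinite {\<sigma>. uniform_modulus \<delta> \<sigma>}"
    using infinitely_many_branches_common_modulus .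
  obtain G0 where G0: "finite G0" "G0 \<subseteq> Env"
    and net: "\<And>g. g \<in> Env \<Longrightarrow> \<exists>g0\<in>G0. dist (coords g) (coords g0) < \<delta>"
    using finite_coords_net[OF \<delta>(1)] by blast
  obtain \<sigma> \<tau> where \<sigma>\<tau>: "\<sigma> \<in> {\<sigma>. uniform_modulus \<delta> \<sigma>}" "\<tau> \<in> {\<sigma>. uniform_modulus \<delta> \<sigma>}" "\<sigma> \<noteq> \<tau>"
    and cells: "\<And>i g. i < r \<Longrightarrow> g \<in> G0 \<Longrightarrow>
      \<bar>\<phi> i (g (branch_point \<sigma>)) - \<phi> i (g (branch_point \<tau>))\<bar> < 1/24"
    by (rule pigeonhole_branches[OF \<delta>(2) G0(1)]) auto
  obtain t i where i: "i < r"
    and sep: "\<bar>\<phi> i (act t (branch_point \<sigma>)) - \<phi> i (act t (branch_point \<tau>))\<bar> \<ge> 1/6"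
    using branch_points_separated[OF \<sigma>\<tau>(3)] .
  obtain g0 where g0: "g0 \<in> G0" "dist (coords (act t)) (coords g0) < \<delta>"
    using net[OF act_in_Env] by blast
  have "\<bar>\<phi> i (act t (branch_point \<sigma>)) - \<phi> i (g0 (branch_point \<sigma>))\<bar> < 1/24"
    "\<bar>\<phi> i (act t (branch_point \<tau>)) - \<phi> i (g0 (branch_point \<tau>))\<bar> < 1/24"
    using \<sigma>\<tau>(1,2) act_in_Env g0 G0(2) i unfolding uniform_modulus_def mem_Collect_eq by blast+
  with cells[OF i g0(1)] sep show False by linarith
qed

end

context aa_flow
begin

text \<open>Otherwise every
  open \<open>V\<close> meeting \<open>M\<close> contains two points of \<open>M\<close> that some translation pulls more than \<open>1/3\<close>
  apart; small neighbourhoods of these points are the halves of a Cantor scheme.\<close>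

lemma uniformly_small_open_piece:
  fixes \<phi> :: "nat \<Rightarrow> 'x \<Rightarrow> real" and r :: nat
  assumes M: "minimal_set act M" and \<phi>_cont: "\<And>i. continuous_on UNIV (\<phi> i)"
    and \<phi>_range: "\<And>i x. \<phi> i x \<in> {0..1}"
  shows "\<exists>V. open V \<and> V \<inter> M \<noteq> {} \<and>
     (\<forall>t. \<forall>x\<in>V \<inter> M. \<forall>y\<in>V \<inter> M. \<forall>i<r. \<bar>\<phi> i (act t x) - \<phi> i (act t y)\<bar> \<le> 1/3)"
proof (rule ccontr)
  assume "\<not> ?thesis"
  then have "\<forall>V. \<exists>t x y i. open V \<and> V \<inter> M \<noteq> {} \<longrightarrow>
      x \<in> V \<inter> M \<and> y \<in> V \<inter> M \<and> i < r \<and> \<bar>\<phi> i (act t x) - \<phi> i (act t y)\<bar> > 1/3"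
    by (auto simp: not_le)
  then obtain sep_time xa xb sep_index where wit: "\<And>V. open V \<Longrightarrow> V \<inter> M \<noteq> {} \<Longrightarrow>
      xa V \<in> V \<inter> M \<and> xb V \<in> V \<inter> M \<and> sep_index V < r \<and>
      \<bar>\<phi> (sep_index V) (act (sep_time V) (xa V)) - \<phi> (sep_index V) (act (sep_time V) (xb V))\<bar> > 1/3"
    by metis
  define dev where
    "dev V b z = \<bar>\<phi> (sep_index V) (act (sep_time V) z) -
                 \<phi> (sep_index V) (act (sep_time V) (if b then xa V else xb V))\<bar>" for V b z
  define half where "half V b = V \<inter> {z. dev V b z < 1/12}" for V b
  have continuous_dev: "continuous_on UNIV (dev V b)" for V b
    unfolding dev_def
    by (intro continuous_intros continuous_on_compose2[OF \<phi>_cont continuous_on_act]) auto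
  have closure_half: "closure (half V b) \<subseteq> {z. dev V b z \<le> 1/12}" for V b
    unfolding half_def
    by (intro closure_minimal closed_Collect_le continuous_dev continuous_on_const) auto
  interpret cantor_scheme act M \<phi> r half sep_time sep_index
  proof
    show "open (half V b)" if "open V" for V b
      unfolding half_def using that by (intro open_Int open_Collect_less continuous_dev continuous_on_const)
    show "half V b \<subseteq> V" for V b unfolding half_def by auto
    show "half V b \<inter> M \<noteq> {}" if "open V" "V \<inter> M \<noteq> {}" for V b
      using wit[OF that] unfolding half_def dev_def by (cases b) auto
    fix V z z' assume V: "open V" "V \<inter> M \<noteq> {}"
      and z: "z \<in> closure (half V True)" "z' \<in> closure (half V False)"
    let ?d = "\<lambda>x. \<phi> (sep_index V) (act (sep_time V) x)"
    have "dev V True z \<le> 1/12" "dev V False z' \<le> 1/12" using z closure_half by blast+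
    then have "\<bar>?d z - ?d (xa V)\<bar> \<le> 1/12" "\<bar>?d z' - ?d (xb V)\<bar> \<le> 1/12"
      unfolding dev_def by simp_all
    moreover have "\<bar>?d (xa V) - ?d (xb V)\<bar> > 1/3" using wit[OF V] by blast
    ultimately have "\<bar>?d z - ?d z'\<bar> \<ge> 1/6" by linarith
    then show "sep_index V < r \<and> \<bar>?d z - ?d z'\<bar> \<ge> 1/6" using wit[OF V] by blast
  qed (fact M \<phi>_cont \<phi>_range)+
  show False by (rule no_cantor_scheme)
qed

end

context flow
begin

lemma urysohn_family:
  assumes M: "closed M" and U: "open U" "\<And>x. x \<in> M \<Longrightarrow> (x, x) \<in> U"
  obtains \<Phi> :: "nat \<Rightarrow> 'x \<Rightarrow> real" and r
  where "\<And>i. continuous_on UNIV (\<Phi> i)" "\<And>i x. \<Phi> i x \<in> {0..1}"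
    "\<And>a b. a \<in> M \<Longrightarrow> b \<in> M \<Longrightarrow> (\<forall>i<r. \<bar>\<Phi> i a - \<Phi> i b\<bar> \<le> 1/3) \<Longrightarrow> (a, b) \<in> U"
proof -
  define C where "C = (M \<times> M) - U"
  have "compact C" unfolding C_def Diff_eq
    using U(1) by (intro compact_Int_closed compact_Times compact_closed M) auto
  have "\<forall>p\<in>C. \<exists>\<phi> :: 'x \<Rightarrow> real.
      continuous_on UNIV \<phi> \<and> (\<forall>x. \<phi> x \<in> {0..1}) \<and> \<phi> (fst p) = 0 \<and> \<phi> (snd p) = 1"
  proof
    fix p assume "p \<in> C"
    then have "fst p \<noteq> snd p" using U(2) unfolding C_def by (cases p) auto
    then show "\<exists>\<phi> :: 'x \<Rightarrow> real.
      continuous_on UNIV \<phi> \<and> (\<forall>x. \<phi> x \<in> {0..1}) \<and> \<phi> (fst p) = 0 \<and> \<phi> (snd p) = 1"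
      by (metis urysohn_points)
  qed
  from bchoice[OF this] obtain ph :: "'x \<times> 'x \<Rightarrow> 'x \<Rightarrow> real" where "\<forall>p\<in>C. continuous_on UNIV (ph p) \<and> (\<forall>x. ph p x \<in> {0..1}) \<and>
      ph p (fst p) = 0 \<and> ph p (snd p) = 1"
    ..
  then have ph: "\<And>p. p \<in> C \<Longrightarrow> continuous_on UNIV (ph p) \<and> (\<forall>x. ph p x \<in> {0..1}) \<and>
      ph p (fst p) = 0 \<and> ph p (snd p) = 1"
    by blast
  define B where "B p = {q :: 'x \<times> 'x. 1/3 < \<bar>ph p (fst q) - ph p (snd q)\<bar>}" for p
  have "open (B p)" if "p \<in> C" for p
    unfolding B_def
    by (intro open_Collect_less continuous_on_const continuous_on_gap) (use ph[OF that] in blast)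
  moreover have "C \<subseteq> (\<Union>p\<in>C. B p)"
    using ph unfolding B_def by force
  ultimately obtain D where D: "D \<subseteq> C" "finite D" "C \<subseteq> (\<Union>p\<in>D. B p)"
    using compactE_image[OF \<open>compact C\<close>, of C B] by blast
  obtain h where h: "bij_betw h {..<card D} D"
    using ex_bij_betw_nat_finite[OF D(2)] by (auto simp: atLeast0LessThan)
  define \<Phi> where "\<Phi> i = (if i < card D then ph (h i) else (\<lambda>_. 0))" for i
  have hC: "h i \<in> C" if "i < card D" for i using h that D(1) by (auto simp: bij_betw_def)
  show ?thesis
  proof (rule that[of \<Phi> "card D"])
    show "continuous_on UNIV (\<Phi> i)" "\<Phi> i x \<in> {0..1}" for i x
      unfolding \<Phi>_def using ph[OF hC] by auto
    fix a b assume ab: "a \<in> M" "b \<in> M" and close: "\<forall>i<card D. \<bar>\<Phi> i a - \<Phi> i b\<bar> \<le> 1/3"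
    show "(a, b) \<in> U"
    proof (rule ccontr)
      assume "(a, b) \<notin> U"
      then obtain p where p: "p \<in> D" "(a, b) \<in> B p" using ab D(3) unfolding C_def by blast
      then obtain i where "i < card D" "h i = p" using h unfolding bij_betw_def by (metis imageE lessThan_iff)
      with p(2) close show False unfolding \<Phi>_def B_def by force
    qed
  qed
qed

text \<open>By minimality, a nonempty open piece of \<open>M\<close> on which all translations are \<open>\<alpha>\<close>-small is
  transported to a neighbourhood of any point \<open>z \<in> M\<close>: some translate of \<open>z\<close> lies in it.\<close>

lemma minimal_spread_uniform_piece:
  assumes M: "minimal_set act M" and V0: "open V0" "V0 \<inter> M \<noteq> {}"
    and small: "\<And>t x y. x \<in> V0 \<inter> M \<Longrightarrow> y \<in> V0 \<inter> M \<Longrightarrow> (act t x, act t y) \<in> \<alpha>"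
    and z: "z \<in> M"
  obtains V where "open V" "z \<in> V" "\<And>t x y. x \<in> V \<inter> M \<Longrightarrow> y \<in> V \<inter> M \<Longrightarrow> (act t x, act t y) \<in> \<alpha>"
proof -
  have M_inv: "\<And>t y. y \<in> M \<Longrightarrow> act t y \<in> M" and "closure (range (\<lambda>t. act t z)) = M"
    using M z unfolding minimal_set_def by auto
  then have "V0 \<inter> closure (range (\<lambda>t. act t z)) \<noteq> {}" using V0(2) by simp
  then obtain s where s: "act s z \<in> V0"
    using open_Int_closure_eq_empty[OF V0(1)] by blast
  show ?thesis
  proof (rule that[of "act s -` V0"])
    show "open (act s -` V0)" using V0(1) continuous_on_act open_vimage by blast
    show "z \<in> act s -` V0" using s by simp
    fix t x y assume "x \<in> act s -` V0 \<inter> M" "y \<in> act s -` V0 \<inter> M"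
    then have "(act (t + -s) (act s x), act (t + -s) (act s y)) \<in> \<alpha>"
      using M_inv by (intro small) auto
    then show "(act t x, act t y) \<in> \<alpha>" by (simp flip: act_add)
  qed
qed

text \<open>Local uniform smallness around every point of \<open>M\<close> yields the entourage required by
  equicontinuity: the union of the squares of the neighbourhoods.\<close>

lemma entourage_from_local_pieces:
  assumes local: "\<And>z. z \<in> M \<Longrightarrow> \<exists>V. open V \<and> z \<in> V \<and>
      (\<forall>t. \<forall>x\<in>V \<inter> M. \<forall>y\<in>V \<inter> M. (act t x, act t y) \<in> \<alpha>)"
  shows "\<exists>\<beta>. entourage_on M \<beta> \<and> (\<forall>x y. (x, y) \<in> \<beta> \<longrightarrow> (\<forall>t. (act t x, act t y) \<in> \<alpha>))"
proof -
  obtain V where V: "\<And>z. z \<in> M \<Longrightarrow> open (V z) \<and> z \<in> V z \<and>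
      (\<forall>t. \<forall>x\<in>V z \<inter> M. \<forall>y\<in>V z \<inter> M. (act t x, act t y) \<in> \<alpha>)"
    using local by metis
  define U where "U = (\<Union>z\<in>M. V z \<times> V z)"
  have "open U" unfolding U_def using V by (intro open_UN ballI open_Times) auto
  moreover have "(x, x) \<in> U" if "x \<in> M" for x unfolding U_def using V[OF that] that by blast
  ultimately have "entourage_on M (U \<inter> (M \<times> M))" unfolding entourage_on_def by blast
  moreover have "(act t x, act t y) \<in> \<alpha>" if "(x, y) \<in> U \<inter> (M \<times> M)" for x y t
    using that V unfolding U_def by blast
  ultimately show ?thesis by blast
qed

end

text \<open>In a flow all of whose points are almost automorphic every minimal set is equicontinuous:
  a finite Urysohn family reduces an entourage to finitely many coordinates, a uniformly small
  open piece exists by the Cantor scheme argument, and minimality spreads it over \<open>M\<close>.\<close>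

lemma (in aa_flow) equicontinuous_minimal:
  assumes M: "minimal_set act M"
  shows "equicontinuous_on act M"
  unfolding equicontinuous_on_def
proof (intro allI impI)
  fix \<alpha> assume "entourage_on M \<alpha>"
  then obtain U where U: "open U" "\<And>x. x \<in> M \<Longrightarrow> (x, x) \<in> U" "U \<inter> (M \<times> M) \<subseteq> \<alpha>"
    unfolding entourage_on_def by blast
  have M_inv: "\<And>t y. y \<in> M \<Longrightarrow> act t y \<in> M" and "closed M"
    using M unfolding minimal_set_def by auto
  then obtain \<Phi> :: "nat \<Rightarrow> 'x \<Rightarrow> real" and r
    where \<Phi>: "\<And>i. continuous_on UNIV (\<Phi> i)" "\<And>i x. \<Phi> i x \<in> {0..1}"
      and \<Phi>_sep: "\<And>a b. a \<in> M \<Longrightarrow> b \<in> M \<Longrightarrow> (\<forall>i<r. \<bar>\<Phi> i a - \<Phi> i b\<bar> \<le> 1/3) \<Longrightarrow> (a, b) \<in> U"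
    using urysohn_family U(1,2) by metis
  obtain V0 where V0: "open V0" "V0 \<inter> M \<noteq> {}"
    and V0_small: "\<forall>t. \<forall>x\<in>V0 \<inter> M. \<forall>y\<in>V0 \<inter> M. \<forall>i<r. \<bar>\<Phi> i (act t x) - \<Phi> i (act t y)\<bar> \<le> 1/3"
    using uniformly_small_open_piece[of M \<Phi> r, OF M \<Phi>] by (elim exE conjE)
  have "(act t x, act t y) \<in> \<alpha>" if "x \<in> V0 \<inter> M" "y \<in> V0 \<inter> M" for t x y
    using \<Phi>_sep[of "act t x" "act t y"] V0_small that M_inv U(3) by blast
  then have "\<exists>V. open V \<and> z \<in> V \<and> (\<forall>t. \<forall>x\<in>V \<inter> M. \<forall>y\<in>V \<inter> M. (act t x, act t y) \<in> \<alpha>)"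
    if "z \<in> M" for z
    using minimal_spread_uniform_piece[OF M V0 _ that] by metis
  then show "\<exists>\<beta>. entourage_on M \<beta> \<and> (\<forall>x y. (x, y) \<in> \<beta> \<longrightarrow> (\<forall>t. (act t x, act t y) \<in> \<alpha>))"
    by (rule entourage_from_local_pieces)
qed

theorem mainTheorem5:
  fixes act :: "'g::topological_group_add \<Rightarrow> 'x::t2_space \<Rightarrow> 'x"
  assumes "compact (UNIV :: 'x set)"
    and "continuous_action act"
  shows "(\<forall>x. almost_automorphic_point act x) \<longleftrightarrow>
         (distal_flow act \<and> (\<forall>M. minimal_set act M \<longrightarrow> equicontinuous_on act M))"
proof
  assume aa: "\<forall>x. almost_automorphic_point act x"
  then interpret aa_flow act using assms by unfold_locales auto
  show "distal_flow act \<and> (\<forall>M. minimal_set act M \<longrightarrow> equicontinuous_on act M)"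
    using all_almost_automorphic_imp_distal[OF aa] equicontinuous_minimal by blast
next
  interpret flow act using assms by unfold_locales
  assume "distal_flow act \<and> (\<forall>M. minimal_set act M \<longrightarrow> equicontinuous_on act M)"
  then show "\<forall>x. almost_automorphic_point act x"
    using distal_equicontinuous_imp_almost_automorphic by blast
qed

end
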